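(* In the spectrum pricing game described in the context, let $(\psi_1,\ldots,\psi_n)$ be any symmetric Nash equilibrium, with support endpoints $L_i$ and $U_i$. Then for each $i\in\{1,\ldots,n\}$, the support of $\psi_i$ is the whole interval $[L_i,U_i]$. Moreover, $U_1=v$ and $U_i=L_{i-1}$ for $i=2,\ldots,n$. In particular, each $\psi_i$ is strictly increasing on $[L_i,U_i]$.
   Context: Spectrum pricing game. There are $l\ge 2$ primaries and $m$ secondaries, $1\le m<l$; there are $n$ channel states $1,\ldots,n$, plus state $0$ meaning "unavailable". Each primary owns one channel, which independently of the others is in state $i\in\{1,\ldots,n\}$ with probability $q_i>0$ and in state $0$ with probability $1-q$, where $q=\sum_{i=1}^n q_i\in(0,1)$. For each state $i\ge1$ there is a penalty function $g_i$, continuous and strictly increasing in the price, with inverse $f_i$, also continuous and strictly increasing. Quoting price $p$ for a channel in state $i$ means the channel offers penalty $g_i(p)$; equivalently, choosing penalty $x$ in state $i$ means charging price $f_i(x)$. Higher states are better: $g_i(p)>g_j(p)$ for all $p$ and $f_i(x)<f_j(x)$ for all $x$ whenever $i<j$. There is a transition cost $c>0$ and a maximum acceptable penalty $v$ with $g_1(c)<v$. We assume that all points used below lie in the common domain of the $f_i$, and that for all $j<k$ and all $x>y>g_j(c)$, $$\frac{f_j(y)-c}{f_k(y)-c}<\frac{f_j(x)-c}{f_k(x)-c}. \qquad (\ast)$$ Each primary knows only its own channel state. A primary whose channel is in state $j\ge1$ draws its penalty from a distribution function $\psi_j$, independently of everything else. A primary in state $0$ offers penalty $v+1$, which is equivalent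 to not offering its channel. If $Y$ channels are offered with penalty at most $v$, the $\min(Y,m)$ channels with the lowest penalties are sold, with ties broken uniformly at random. A primary selling at price $p$ earns $p-c$; otherwise it earns $0$. Strategies and equilibrium. A symmetric strategy profile is one in which every primary uses the same $(\psi_1,\ldots,\psi_n)$. Given such a profile, let $r(x)$ be the probability that a given primary's channel offered at penalty $x$ is sold, and set $\phi_j(x)=(f_j(x)-c)\,r(x)$, the expected profit of choosing penalty $x$ in state $j$. A symmetric Nash equilibrium (NE) is a symmetric profile in which no primary, in any state $j$, can increase its expected profit by unilaterally replacing $\psi_j$ with any other distribution. A penalty $x$ is a best response in state $j$ if $\phi_j(x)=\sup_{y\in\mathbb{R}}\phi_j(y)=:u_{j,\max}$. For a distribution function $\psi_i$, write $L_i=\inf\{x:\psi_i(x)>0\}$ and $U_i=\inf\{x:\psi_i(x)=1\}$. *)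

theory Defs
  imports "HOL-Probability.Probability"
begin

text \<open>The rival penalty distribution of one other primary is the mixture
(1-q) point mass at v+1 plus the sum over i of q i times psi i.\<close>

text \<open>Probability that one rival offers a penalty strictly below x (for x \<le> v).\<close>
definition rival_lt :: "nat \<Rightarrow> (nat \<Rightarrow> real) \<Rightarrow> (nat \<Rightarrow> real measure) \<Rightarrow> real \<Rightarrow> real" where
  "rival_lt n q \<psi> x = (\<Sum>i=1..n. q i * measure (\<psi> i) {..<x})"

text \<open>Probability that one rival offers exactly penalty x (for x \<le> v).\<close>
definition rival_eq :: "nat \<Rightarrow> (nat \<Rightarrow> real) \<Rightarrow> (nat \<Rightarrow> real measure) \<Rightarrow> real \<Rightarrow> real" where
  "rival_eq n q \<psi> x = (\<Sum>i=1..n. q i * measure (\<psi> i) {x})"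

text \<open>Conditional probability of selling when k rivals are strictly cheaper and
t rivals tie, with m buyers and uniform tie breaking.\<close>
definition sale_weight :: "nat \<Rightarrow> nat \<Rightarrow> nat \<Rightarrow> real" where
  "sale_weight m k t =
     (if m \<le> k then 0 else if k + t < m then 1 else real (m - k) / real (t + 1))"

text \<open>r(x): probability that a primary offering penalty x sells, when the other
l-1 primaries independently follow the symmetric profile psi (multinomial over the
numbers of rivals strictly below / equal to / strictly above x).\<close>
definition sale_prob ::
  "nat \<Rightarrow> nat \<Rightarrow> nat \<Rightarrow> (nat \<Rightarrow> real) \<Rightarrow> (nat \<Rightarrow> real measure) \<Rightarrow> real \<Rightarrow> real \<Rightarrow> real" where
  "sale_prob l m n q \<psi> v x =
     (if x \<le> v then
        (let a = rival_lt n q \<psi> x; b = rival_eq n q \<psi> x; d = 1 - a - b; N = l - 1 in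
         \<Sum>k=0..N. \<Sum>t=0..N-k.
            real (N choose k) * real ((N - k) choose t) * a ^ k * b ^ t * d ^ (N - k - t)
            * sale_weight m k t)
      else 0)"

definition profit ::
  "nat \<Rightarrow> nat \<Rightarrow> nat \<Rightarrow> (nat \<Rightarrow> real) \<Rightarrow> (nat \<Rightarrow> real \<Rightarrow> real) \<Rightarrow> real \<Rightarrow> real
     \<Rightarrow> (nat \<Rightarrow> real measure) \<Rightarrow> nat \<Rightarrow> real \<Rightarrow> real" where
  "profit l m n q f c v \<psi> j x = (f j x - c) * sale_prob l m n q \<psi> v x"

text \<open>Symmetric Nash equilibrium: in every state j, no distribution yields a
strictly larger expected profit.  (The positive part of the profit is bounded,
so a deviation with non-integrable profit has expected profit -infinity.)\<close>
definition symmetric_NE ::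
  "nat \<Rightarrow> nat \<Rightarrow> nat \<Rightarrow> (nat \<Rightarrow> real) \<Rightarrow> (nat \<Rightarrow> real \<Rightarrow> real) \<Rightarrow> real \<Rightarrow> real
     \<Rightarrow> (nat \<Rightarrow> real measure) \<Rightarrow> bool" where
  "symmetric_NE l m n q f c v \<psi> \<longleftrightarrow>
     (\<forall>j\<in>{1..n}. real_distribution (\<psi> j)) \<and>
     (\<forall>j\<in>{1..n}. integrable (\<psi> j) (profit l m n q f c v \<psi> j) \<and>
        (\<forall>\<mu>. real_distribution \<mu> \<longrightarrow> integrable \<mu> (profit l m n q f c v \<psi> j) \<longrightarrow>
            (\<integral>x. profit l m n q f c v \<psi> j x \<partial>\<mu>) \<le> (\<integral>x. profit l m n q f c v \<psi> j x \<partial>\<psi> j)))"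

text \<open>Support of a distribution on the reals (the smallest closed set of full measure).\<close>
definition dist_support :: "real measure \<Rightarrow> real set" where
  "dist_support M = {x. \<forall>e>0. measure M {x - e<..<x + e} > 0}"

definition supp_L :: "real measure \<Rightarrow> real" where
  "supp_L M = Inf {x. cdf M x > 0}"

definition supp_U :: "real measure \<Rightarrow> real" where
  "supp_U M = Inf {x. cdf M x = 1}"

end

theory Submission
  imports Defs
begin

(*
  Fix a symmetric NE psi and let u j be the equilibrium payoff in state j.  Deviating to a
  point mass shows that phi j x \<le> u j for every penalty x, hence psi j-almost every
  penalty is a best response, and every set of positive psi j-mass contains one.

  1. No atoms: an atom at x would create a tie at x with positive probability; ties
     strictly lower the sale probability, so slightly smaller penalties (which avoid the
     tie but lose almost no price) would be strictly more profitable.  Without atoms the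
     sale probability r is a continuous function R of the rivals' distribution functions,
     and phi j x = (f j x - c) * R x for x \<le> v.
  2. Single crossing: by the ratio condition, best responses of a higher state never lie
     above best responses of a lower state.
  3. No gaps: if no state puts mass on (z, y] and z is a best response, then y earns the
     same sale probability at a strictly higher price, which is impossible.
  Combining 2 and 3 yields that every cdf is strictly increasing between its support
  endpoints, that U 1 = v and that U i = L (i - 1); the support statement then follows
  from a general fact about distributions with continuous cdf.
*)

section \<open>Facts on real distributions\<close>

context real_distribution
begin

lemma measure_atMost_split: "measure M {..x} = measure M {..<x} + measure M {x}"
proof -
  have "measure M ({..<x} \<union> {x}) = measure M {..<x} + measure M {x}"
    by (rule finite_measure_Union) auto
  moreover have "{..<x} \<union> {x} = {..x}" by auto
  ultimately show ?thesis by simp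
qed

lemma measure_greaterThan: "measure M {x<..} = 1 - cdf M x"
proof -
  have "{x<..} = space M - {..x}" by auto
  moreover have "prob (space M - {..x}) = 1 - prob {..x}" by (rule prob_compl) auto
  ultimately show ?thesis by (simp add: cdf_def)
qed

lemma measure_lessThan_at_left: "((\<lambda>y. measure M {..<y}) \<longlongrightarrow> measure M {..<x}) (at_left x)"
proof (rule order_tendstoI)
  fix a assume "a < measure M {..<x}"
  then obtain b where b: "b < x" "\<And>y. b < y \<Longrightarrow> y < x \<Longrightarrow> a < cdf M y"
    using order_tendstoD(1)[OF cdf_at_left] unfolding eventually_at_left_field by blast
  show "eventually (\<lambda>y. a < measure M {..<y}) (at_left x)"
    unfolding eventually_at_left_field
  proof (intro exI[of _ b] conjI allI impI)
    fix y assume y: "b < y" "y < x"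
    have "a < cdf M ((b + y) / 2)" using b y by auto
    also have "\<dots> \<le> measure M {..<y}" unfolding cdf_def
      using y by (intro finite_measure_mono) auto
    finally show "a < measure M {..<y}" .
  qed fact
next
  fix a assume a: "measure M {..<x} < a"
  have "measure M {..<y} \<le> measure M {..<x}" if "y < x" for y
    using that by (intro finite_measure_mono) auto
  with a show "eventually (\<lambda>y. measure M {..<y} < a) (at_left x)"
    unfolding eventually_at_left_field by (intro exI[of _ "x - 1"]) force
qed

text \<open>Monotone functions are Borel measurable.\<close>
lemma borel_measurable_measure_lessThan:
  "(\<lambda>x. measure M {..<x}) \<in> borel_measurable borel"
  by (intro borel_measurable_mono monoI finite_measure_mono) auto

lemma borel_measurable_cdf: "cdf M \<in> borel_measurable borel"
  by (intro borel_measurable_mono monoI cdf_nondecreasing)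

lemma supp_L_cdf:
  assumes cont: "continuous_on UNIV (cdf M)" and a: "cdf M a = 0" and b: "cdf M b = 1"
  shows "x \<le> supp_L M \<Longrightarrow> cdf M x = 0" and "supp_L M < x \<Longrightarrow> 0 < cdf M x"
proof -
  let ?S = "{x. 0 < cdf M x}" and ?L = "supp_L M"
  have "b \<in> ?S" using b by simp
  then have ne: "?S \<noteq> {}" by blast
  have bdd: "bdd_below ?S"
  proof (rule bdd_belowI)
    fix x assume "x \<in> ?S"
    then show "a \<le> x" using a cdf_nondecreasing[of x a] by (cases "x \<le> a") auto
  qed
  show pos: "0 < cdf M x" if Lx: "?L < x" for x
  proof -
    obtain y where "0 < cdf M y" "y < x"
      using cInf_lessD[OF ne] Lx unfolding supp_L_def by blast
    then show ?thesis using cdf_nondecreasing[of y x] by simp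
  qed
  have below: "cdf M x = 0" if "x < ?L" for x
  proof (rule ccontr)
    assume "cdf M x \<noteq> 0"
    then have "?L \<le> x" unfolding supp_L_def using bdd cdf_nonneg[of x] by (intro cInf_lower) auto
    with that show False by simp
  qed
  have "(cdf M \<longlongrightarrow> cdf M ?L) (at_left ?L)"
    using cont by (simp add: continuous_on_eq_continuous_at filterlim_at_split isCont_def)
  moreover have "eventually (\<lambda>y. cdf M y = 0) (at_left ?L)"
    unfolding eventually_at_left_field using below by (intro exI[of _ "?L - 1"]) auto
  ultimately have "cdf M ?L = 0"
    using tendsto_unique[OF _ _ tendsto_eventually] by (metis trivial_limit_at_left_real)
  with below show "cdf M x = 0" if "x \<le> ?L" for x
    using that by (cases "x = ?L") auto
qed

lemma supp_U_cdf:
  assumes cont: "continuous_on UNIV (cdf M)" and a: "cdf M a = 0" and b: "cdf M b = 1"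
  shows "supp_L M < supp_U M" and "supp_U M \<le> b"
    and "supp_U M \<le> x \<Longrightarrow> cdf M x = 1" and "x < supp_U M \<Longrightarrow> cdf M x < 1"
proof -
  let ?S = "{x. cdf M x = 1}" and ?U = "supp_U M"
  have ne: "?S \<noteq> {}" using b by auto
  have bdd: "bdd_below ?S"
  proof (rule bdd_belowI)
    fix x assume "x \<in> ?S"
    then show "a \<le> x" using a cdf_nondecreasing[of x a] by (cases "x \<le> a") auto
  qed
  have "closed ?S" using continuous_closed_preimage_constant[OF cont closed_UNIV] by simp
  then have FU: "cdf M ?U = 1"
    using closed_contains_Inf[OF ne bdd] unfolding supp_U_def by simp
  then show "supp_L M < ?U" using supp_L_cdf(1)[OF cont a b, of ?U] by force
  show "?U \<le> b" unfolding supp_U_def using b bdd by (intro cInf_lower) auto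
  show "cdf M x = 1" if "?U \<le> x" for x
    using cdf_nondecreasing[OF that] FU cdf_bounded_prob[of x] by simp
  show "cdf M x < 1" if "x < ?U" for x
  proof (rule ccontr)
    assume "\<not> cdf M x < 1"
    then have "?U \<le> x" unfolding supp_U_def using bdd cdf_bounded_prob[of x]
      by (intro cInf_lower) auto
    with that show False by simp
  qed
qed

lemma dist_support_eq_interval:
  assumes ab: "a < b" and low: "\<And>x. x \<le> a \<Longrightarrow> cdf M x = 0"
    and high: "\<And>x. b \<le> x \<Longrightarrow> cdf M x = 1" and strict: "strict_mono_on {a..b} (cdf M)"
  shows "dist_support M = {a..b}"
proof (intro set_eqI iffI)
  fix x assume x: "x \<in> dist_support M"
  then have pos: "0 < measure M {x - e<..<x + e}" if "0 < e" for e
    using that by (simp add: dist_support_def)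
  show "x \<in> {a..b}"
  proof (rule ccontr)
    assume "x \<notin> {a..b}"
    then consider "x < a" | "b < x" by force
    then show False
    proof cases
      case 1
      have "measure M {x - (a - x)<..<x + (a - x)} \<le> measure M {..a}"
        by (intro finite_measure_mono) auto
      with pos[of "a - x"] 1 low[of a] show False by (simp add: cdf_def)
    next
      case 2
      have "measure M {x - (x - b)<..<x + (x - b)} \<le> measure M {b<..}"
        by (intro finite_measure_mono) auto
      with pos[of "x - b"] 2 high[of b] show False by (simp add: measure_greaterThan)
    qed
  qed
next
  fix x assume x: "x \<in> {a..b}"
  show "x \<in> dist_support M" unfolding dist_support_def
  proof (intro CollectI allI impI)
    fix e :: real assume e: "0 < e"
    define p where "p = max a (x - e / 2)"
    define p' where "p' = min b (x + e / 2)"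
    have pp: "p < p'" using ab x e by (auto simp: p_def p'_def)
    have "0 < cdf M p' - cdf M p"
      using strict pp ab x by (auto simp: p_def p'_def strict_mono_on_def)
    also have "\<dots> = measure M {p<..p'}" using cdf_diff_eq[OF pp] by simp
    also have "\<dots> \<le> measure M {x - e<..<x + e}"
      using e by (intro finite_measure_mono) (auto simp: p_def p'_def)
    finally show "0 < measure M {x - e<..<x + e}" .
  qed
qed

end

section \<open>The sale probability as a function of the rivals' behaviour\<close>

text \<open>Each of N rivals is independently cheaper with probability a, tied with
  probability b, and more expensive otherwise; sell_prob is the resulting probability of
  selling one of m channels.  Without ties (b = 0) this is sell_prob_no_tie N m a d,
  the probability that fewer than m rivals are cheaper, d being the probability of a
  more expensive rival.\<close>

definition sell_prob :: "nat \<Rightarrow> nat \<Rightarrow> real \<Rightarrow> real \<Rightarrow> real" where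
  "sell_prob N m a b = (\<Sum>k=0..N. \<Sum>t=0..N-k. real (N choose k) * real ((N-k) choose t)
     * a^k * b^t * (1-a-b)^(N-k-t) * sale_weight m k t)"

definition sell_prob_no_tie :: "nat \<Rightarrow> nat \<Rightarrow> real \<Rightarrow> real \<Rightarrow> real" where
  "sell_prob_no_tie N m a d = (\<Sum>k=0..N. real (N choose k) * a^k * d^(N-k) * (if k < m then 1 else 0))"

lemma sale_prob_eq_sell_prob:
  "sale_prob l m n q \<psi> v x =
     (if x \<le> v then sell_prob (l-1) m (rival_lt n q \<psi> x) (rival_eq n q \<psi> x) else 0)"
  by (simp add: sale_prob_def sell_prob_def Let_def)

lemma sale_weight_nonneg: "0 \<le> sale_weight m k t"
  by (simp add: sale_weight_def)

lemma sale_weight_le_1: "sale_weight m k t \<le> 1"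
  by (auto simp: sale_weight_def field_simps of_nat_diff)

lemma sale_weight_all_tied: "1 \<le> m \<Longrightarrow> m \<le> N \<Longrightarrow> sale_weight m 0 N < 1"
  by (simp add: sale_weight_def)

text \<open>Selling is possible as long as rivals are more expensive with positive
  probability: with probability d^N no rival is cheaper.\<close>
lemma sell_prob_no_tie_pos:
  assumes "0 \<le> a" "0 < d" "1 \<le> m" shows "0 < sell_prob_no_tie N m a d"
proof -
  have "0 < real (N choose 0) * a^0 * d^(N-0) * (if 0 < m then 1 else 0)"
    using assms by simp
  also have "\<dots> \<le> sell_prob_no_tie N m a d"
    unfolding sell_prob_no_tie_def using assms by (intro member_le_sum) auto
  finally show ?thesis .
qed

text \<open>Winning all ties can only help: counting just the tie-free outcomes (t = 0)
  gives a lower bound, and without ties the two notions agree.\<close>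

lemma sell_prob_ge_no_tie:
  assumes "0 \<le> a" "0 \<le> b" "a + b \<le> 1"
  shows "sell_prob_no_tie N m a (1-a-b) \<le> sell_prob N m a b"
  unfolding sell_prob_no_tie_def sell_prob_def
proof (rule sum_mono)
  fix k assume k: "k \<in> {0..N}"
  let ?F = "\<lambda>t. real (N choose k) * real ((N-k) choose t) * a^k * b^t
     * (1-a-b)^(N-k-t) * sale_weight m k t"
  have "real (N choose k) * a^k * (1-a-b)^(N-k) * (if k < m then 1 else 0) = ?F 0"
    by (simp add: sale_weight_def)
  also have "?F 0 \<le> sum ?F {0..N-k}"
    using assms by (intro member_le_sum) (auto intro!: mult_nonneg_nonneg sale_weight_nonneg)
  finally show "real (N choose k) * a^k * (1-a-b)^(N-k) * (if k < m then 1 else 0) \<le> sum ?F {0..N-k}" .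
qed

lemma sell_prob_no_ties: "sell_prob N m a 0 = sell_prob_no_tie N m a (1-a)"
  unfolding sell_prob_no_tie_def sell_prob_def
proof (rule sum.cong[OF refl])
  fix k assume k: "k \<in> {0..N}"
  let ?F = "\<lambda>t. real (N choose k) * real ((N-k) choose t) * a^k * (0::real)^t
     * (1-a-0)^(N-k-t) * sale_weight m k t"
  have "sum ?F {0..N-k} = ?F 0 + sum ?F {Suc 0..N-k}"
    by (rule sum.atLeast_Suc_atMost) simp
  also have "sum ?F {Suc 0..N-k} = 0" by (intro sum.neutral) auto
  finally show "sum ?F {0..N-k} = real (N choose k) * a^k * (1-a)^(N-k) * (if k < m then 1 else 0)"
    by (simp add: sale_weight_def)
qed

text \<open>Ties of positive probability strictly lower the sale probability compared with
  winning all ties: with probability b^N all rivals tie and the tie break loses.\<close>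

lemma sell_prob_lt_no_tie:
  assumes a: "0 \<le> a" and b: "0 < b" and ab: "a + b \<le> 1" and m: "1 \<le> m" "m \<le> N"
  shows "sell_prob N m a b < sell_prob_no_tie N m a (1-a)"
proof -
  define d where "d = 1 - a - b"
  let ?F = "\<lambda>k t. real (N choose k) * real ((N-k) choose t) * a^k * b^t * d^(N-k-t)"
  let ?W = "\<lambda>k::nat. if k < m then 1 else 0 :: real"
  have no_tie: "sell_prob_no_tie N m a (1-a) = (\<Sum>k=0..N. \<Sum>t=0..N-k. ?F k t * ?W k)"
    unfolding sell_prob_no_tie_def
  proof (rule sum.cong[OF refl])
    fix k
    have "(1-a)^(N-k) = (\<Sum>t\<le>N-k. real ((N-k) choose t) * b^t * d^(N-k-t))"
      unfolding binomial_ring[symmetric] by (simp add: d_def)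
    then show "real (N choose k) * a^k * (1-a)^(N-k) * ?W k = (\<Sum>t=0..N-k. ?F k t * ?W k)"
      by (simp add: atLeast0AtMost sum_distrib_left sum_distrib_right algebra_simps)
  qed
  have tie: "sell_prob N m a b = (\<Sum>k=0..N. \<Sum>t=0..N-k. ?F k t * sale_weight m k t)"
    unfolding sell_prob_def d_def by simp
  have F_nonneg: "0 \<le> ?F k t" for k t using a b ab by (simp add: d_def)
  have le: "?F k t * sale_weight m k t \<le> ?F k t * ?W k" for k t
  proof (cases "k < m")
    case True
    then show ?thesis using F_nonneg[of k t] sale_weight_le_1[of m k t] by (simp add: mult_left_le)
  qed (simp add: sale_weight_def)
  have strict: "?F 0 N * sale_weight m 0 N < ?F 0 N * ?W 0"
    using sale_weight_all_tied[OF m] a b m by simp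
  have "(\<Sum>t=0..N. ?F 0 t * sale_weight m 0 t) < (\<Sum>t=0..N. ?F 0 t * ?W 0)"
  proof (rule sum_strict_mono_ex1)
    show "\<forall>t\<in>{0..N}. ?F 0 t * sale_weight m 0 t \<le> ?F 0 t * ?W 0" using le by blast
    show "\<exists>t\<in>{0..N}. ?F 0 t * sale_weight m 0 t < ?F 0 t * ?W 0"
      using strict by (intro bexI[of _ N]) auto
  qed simp
  then show ?thesis unfolding no_tie tie
  proof (intro sum_strict_mono_ex1)
    show "\<forall>k\<in>{0..N}. (\<Sum>t=0..N-k. ?F k t * sale_weight m k t) \<le> (\<Sum>t=0..N-k. ?F k t * ?W k)"
      by (intro ballI sum_mono le)
  qed (auto intro!: bexI[of _ 0])
qed

lemma sell_prob_pos:
  assumes "0 \<le> a" "0 \<le> b" "a + b < 1" "1 \<le> m" shows "0 < sell_prob N m a b"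
  using sell_prob_no_tie_pos[of a "1-a-b" m N] sell_prob_ge_no_tie[of a b N m] assms by linarith

section \<open>Symmetric equilibria\<close>

text \<open>The hypotheses of the theorem that the argument actually uses.\<close>

locale spectrum_NE =
  fixes l m n :: nat and q :: "nat \<Rightarrow> real"
    and f g :: "nat \<Rightarrow> real \<Rightarrow> real" and c v :: real
    and \<psi> :: "nat \<Rightarrow> real measure"
  assumes m1: "1 \<le> m" and ml: "m < l" and n1: "n \<ge> 1"
    and qpos: "\<forall>i\<in>{1..n}. q i > 0"
    and qsum: "(\<Sum>i=1..n. q i) < 1"
    and f_cont: "\<forall>i\<in>{1..n}. continuous_on UNIV (f i)"
    and f_mono: "\<forall>i\<in>{1..n}. strict_mono (f i)"
    and g_mono: "\<forall>i\<in>{1..n}. strict_mono (g i)"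
    and gf: "\<forall>i\<in>{1..n}. \<forall>x. g i (f i x) = x"
    and fg: "\<forall>i\<in>{1..n}. \<forall>p. f i (g i p) = p"
    and f_order: "\<forall>i\<in>{1..n}. \<forall>j\<in>{1..n}. i < j \<longrightarrow> (\<forall>x. f i x < f j x)"
    and g1v: "g 1 c < v"
    and ratio: "\<forall>j\<in>{1..n}. \<forall>k\<in>{1..n}. j < k \<longrightarrow> (\<forall>x y. g j c < y \<longrightarrow> y < x \<longrightarrow>
                 (f j y - c) / (f k y - c) < (f j x - c) / (f k x - c))"
    and NE: "symmetric_NE l m n q f c v \<psi>"
begin

abbreviation "\<phi> \<equiv> profit l m n q f c v \<psi>"
abbreviation "below \<equiv> rival_lt n q \<psi>"
abbreviation "tie \<equiv> rival_eq n q \<psi>"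

definition u :: "nat \<Rightarrow> real" where "u j = (\<integral>x. \<phi> j x \<partial>\<psi> j)"

lemma distr: "j \<in> {1..n} \<Longrightarrow> real_distribution (\<psi> j)"
  using NE unfolding symmetric_NE_def by blast

lemma finite_borel: "j \<in> {1..n} \<Longrightarrow> finite_borel_measure (\<psi> j)"
  using distr real_distribution.finite_borel_measure_M by blast

lemma mass_greaterThan: "j \<in> {1..n} \<Longrightarrow> measure (\<psi> j) {x<..} = 1 - cdf (\<psi> j) x"
  using real_distribution.measure_greaterThan[OF distr] .

lemma mass_interval:
  "j \<in> {1..n} \<Longrightarrow> x < y \<Longrightarrow> measure (\<psi> j) {x<..y} = cdf (\<psi> j) y - cdf (\<psi> j) x"
  by (simp add: finite_borel_measure.cdf_diff_eq[OF finite_borel])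

lemma cdf_mono: "j \<in> {1..n} \<Longrightarrow> x \<le> y \<Longrightarrow> cdf (\<psi> j) x \<le> cdf (\<psi> j) y"
  using finite_borel_measure.cdf_nondecreasing[OF finite_borel] .

lemma mass_zero_subset:
  assumes j: "j \<in> {1..n}" and "S \<subseteq> T" "T \<in> sets borel" "measure (\<psi> j) T = 0"
  shows "measure (\<psi> j) S = 0"
proof -
  interpret real_distribution "\<psi> j" using distr[OF j] .
  have "measure (\<psi> j) S \<le> measure (\<psi> j) T" using assms by (intro finite_measure_mono) auto
  then show ?thesis using assms(4) measure_nonneg[of "\<psi> j" S] by linarith
qed

lemma q_nonneg: "i \<in> {1..n} \<Longrightarrow> 0 \<le> q i"
  using qpos less_imp_le by blast

lemma below_nonneg: "0 \<le> below x"
  unfolding rival_lt_def by (auto intro!: sum_nonneg mult_nonneg_nonneg q_nonneg)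

lemma tie_nonneg: "0 \<le> tie x"
  unfolding rival_eq_def by (auto intro!: sum_nonneg mult_nonneg_nonneg q_nonneg)

lemma below_plus_tie: "below x + tie x = (\<Sum>i=1..n. q i * cdf (\<psi> i) x)"
  unfolding rival_lt_def rival_eq_def cdf_def sum.distrib[symmetric]
  by (intro sum.cong) (auto simp: real_distribution.measure_atMost_split[OF distr] algebra_simps)

text \<open>A rival is unavailable with probability 1 - q > 0, so it is never certainly
  cheaper or tied.\<close>
lemma below_plus_tie_lt_1: "below x + tie x < 1"
proof -
  have "below x + tie x \<le> (\<Sum>i=1..n. q i)" unfolding below_plus_tie
    using qpos real_distribution.cdf_bounded_prob[OF distr]
    by (intro sum_mono) (auto intro: mult_left_le)
  with qsum show ?thesis by linarith
qed

lemma sale_prob_eq: "sale_prob l m n q \<psi> v x =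
    (if x \<le> v then sell_prob (l-1) m (below x) (tie x) else 0)"
  by (rule sale_prob_eq_sell_prob)

lemma sale_prob_pos: "x \<le> v \<Longrightarrow> 0 < sale_prob l m n q \<psi> v x"
  using sell_prob_pos[OF below_nonneg tie_nonneg below_plus_tie_lt_1 m1] by (simp add: sale_prob_eq)

text \<open>Profits are Borel measurable, so point masses are admissible deviations.\<close>
lemma profit_measurable: "j \<in> {1..n} \<Longrightarrow> \<phi> j \<in> borel_measurable borel"
proof -
  assume j [measurable]: "j \<in> {1..n}"
  have [measurable]:
      "i \<in> {1..n} \<Longrightarrow> (\<lambda>x. measure (\<psi> i) {..<x}) \<in> borel_measurable borel"
      "i \<in> {1..n} \<Longrightarrow> cdf (\<psi> i) \<in> borel_measurable borel" for i
    using distr real_distribution.borel_measurable_measure_lessThan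
      real_distribution.borel_measurable_cdf by blast+
  have [measurable]: "f j \<in> borel_measurable borel"
    using f_cont j by (intro borel_measurable_continuous_onI) auto
  have tie_eq: "tie x = (\<Sum>i=1..n. q i * (cdf (\<psi> i) x - measure (\<psi> i) {..<x}))" for x
    by (auto simp: rival_eq_def cdf_def real_distribution.measure_atMost_split[OF distr]
        intro!: sum.cong)
  have "\<phi> j = (\<lambda>x. (f j x - c) * (if x \<le> v then sell_prob (l-1) m
      (\<Sum>i=1..n. q i * measure (\<psi> i) {..<x})
      (\<Sum>i=1..n. q i * (cdf (\<psi> i) x - measure (\<psi> i) {..<x})) else 0))"
    unfolding profit_def[abs_def] sale_prob_eq rival_lt_def tie_eq ..
  also have "\<dots> \<in> borel_measurable borel" unfolding sell_prob_def by measurable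
  finally show ?thesis .
qed

subsection \<open>Best responses\<close>

text \<open>No penalty beats the equilibrium payoff: deviating to a point mass is allowed.\<close>
lemma profit_le_u: assumes j: "j \<in> {1..n}" shows "\<phi> j x \<le> u j"
proof -
  let ?M = "return borel x"
  interpret M: prob_space ?M by (rule prob_space_return) simp
  have "real_distribution ?M"
    by (auto simp: real_distribution_def real_distribution_axioms_def prob_space_return)
  moreover have "integrable ?M (\<phi> j)"
    by (rule M.integrable_const_bound[where B = "norm (\<phi> j x)"])
      (use j profit_measurable[OF j] in \<open>auto simp: AE_return\<close>)
  ultimately have "(\<integral>y. \<phi> j y \<partial>?M) \<le> u j"
    using NE j unfolding symmetric_NE_def u_def by blast
  then show ?thesis using profit_measurable[OF j] by (simp add: integral_return)
qed

text \<open>Since the payoff equals the expected profit, almost every penalty played is a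
  best response.\<close>
lemma AE_best_response: assumes j: "j \<in> {1..n}" shows "AE x in \<psi> j. \<phi> j x = u j"
proof -
  interpret real_distribution "\<psi> j" using distr[OF j] .
  have int: "integrable (\<psi> j) (\<phi> j)" using NE j unfolding symmetric_NE_def by blast
  then have "(\<integral>x. u j - \<phi> j x \<partial>\<psi> j) = 0" using prob_space by (simp add: u_def)
  then have "AE x in \<psi> j. u j - \<phi> j x = 0"
    using integral_nonneg_eq_0_iff_AE[of "\<psi> j" "\<lambda>x. u j - \<phi> j x"] int profit_le_u[OF j] by auto
  then show ?thesis by auto
qed

lemma measure_no_best_response:
  assumes j: "j \<in> {1..n}" and S: "S \<in> sets borel"
    and nb: "\<And>x. x \<in> S \<Longrightarrow> \<phi> j x \<noteq> u j"
  shows "measure (\<psi> j) S = 0"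
proof -
  interpret real_distribution "\<psi> j" using distr[OF j] .
  have "AE x in \<psi> j. x \<notin> S" using AE_best_response[OF j] nb by (auto elim: eventually_mono)
  then have "S \<in> null_sets (\<psi> j)" using AE_iff_null[of "\<psi> j" "\<lambda>x. x \<notin> S"] S by auto
  then show ?thesis by (simp add: measure_def null_setsD1)
qed

lemma best_response_exists:
  assumes j: "j \<in> {1..n}" and S: "S \<in> sets borel" and pos: "0 < measure (\<psi> j) S"
  obtains x where "x \<in> S" "\<phi> j x = u j"
  using measure_no_best_response[OF j S] pos by force

text \<open>Offering the largest acceptable penalty v is profitable in every state, so
  equilibrium payoffs are positive.\<close>
lemma c_lt_f_v: assumes j: "j \<in> {1..n}" shows "c < f j v"
proof -
  have "c = f 1 (g 1 c)" using fg n1 by auto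
  also have "\<dots> < f 1 v" using f_mono n1 g1v by (auto simp: strict_mono_def)
  also have "\<dots> \<le> f j v" using f_order j n1 by (cases "j = 1") (auto simp: less_imp_le)
  finally show ?thesis .
qed

lemma u_pos: assumes j: "j \<in> {1..n}" shows "0 < u j"
proof -
  have "0 < \<phi> j v" unfolding profit_def using c_lt_f_v[OF j] sale_prob_pos[of v] by simp
  then show ?thesis using profit_le_u[OF j, of v] by linarith
qed

lemma best_response_props:
  assumes j: "j \<in> {1..n}" and br: "\<phi> j x = u j"
  shows "x \<le> v" and "c < f j x" and "g j c < x"
proof -
  have p: "0 < \<phi> j x" using br u_pos[OF j] by simp
  then show xv: "x \<le> v" by (auto simp: profit_def sale_prob_eq split: if_splits)
  show fx: "c < f j x" using p sale_prob_pos[OF xv] unfolding profit_def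
    by (simp add: zero_less_mult_iff)
  have "g j c < g j (f j x)" using g_mono j fx by (auto simp: strict_mono_def)
  then show "g j c < x" using gf j by auto
qed

subsection \<open>Absence of atoms\<close>

text \<open>Counting only the outcomes in which no rival ties gives a lower bound for the
  profit; as y increases to x this lower bound tends to the tie-free profit at x, since
  the mass of rivals at or below y tends to the mass strictly below x.\<close>

lemma profit_ge_no_tie:
  assumes "y \<le> v" and "0 \<le> f j y - c"
  shows "(f j y - c) * sell_prob_no_tie (l-1) m (below y) (1 - below y - tie y) \<le> \<phi> j y"
proof -
  have "sell_prob_no_tie (l-1) m (below y) (1 - below y - tie y) \<le> sell_prob (l-1) m (below y) (tie y)"
    using sell_prob_ge_no_tie[OF below_nonneg tie_nonneg] below_plus_tie_lt_1[of y] by simp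
  then show ?thesis using assms by (simp add: profit_def sale_prob_eq mult_left_mono)
qed

lemma profit_no_tie_at_left:
  assumes j: "j \<in> {1..n}"
  shows "((\<lambda>y. (f j y - c) * sell_prob_no_tie (l-1) m (below y) (1 - below y - tie y))
           \<longlongrightarrow> (f j x - c) * sell_prob_no_tie (l-1) m (below x) (1 - below x)) (at_left x)"
proof -
  have below: "(below \<longlongrightarrow> below x) (at_left x)"
    unfolding rival_lt_def[abs_def]
    by (intro tendsto_sum tendsto_mult_left real_distribution.measure_lessThan_at_left distr) auto
  have "((\<lambda>y. \<Sum>i=1..n. q i * cdf (\<psi> i) y) \<longlongrightarrow> below x) (at_left x)"
    unfolding rival_lt_def using distr
    by (intro tendsto_sum tendsto_mult_left finite_borel_measure.cdf_at_left[OF finite_borel]) auto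
  then have below_tie: "((\<lambda>y. below y + tie y) \<longlongrightarrow> below x) (at_left x)"
    by (simp add: below_plus_tie)
  have "isCont (f j) x" using f_cont j by (simp add: continuous_on_eq_continuous_at)
  then have "(f j \<longlongrightarrow> f j x) (at_left x)" by (simp add: filterlim_at_split isCont_def)
  then show ?thesis unfolding sell_prob_no_tie_def diff_diff_eq
    by (intro tendsto_intros below below_tie)
qed

text \<open>No atoms: at an atom x, ties have positive probability and strictly reduce the sale
  probability, so penalties slightly below x would earn more than the payoff u j.\<close>
lemma no_atom: assumes j: "j \<in> {1..n}" shows "measure (\<psi> j) {x} = 0"
proof (rule ccontr)
  let ?G = "\<lambda>y. sell_prob_no_tie (l-1) m (below y) (1 - below y - tie y)"
  assume "measure (\<psi> j) {x} \<noteq> 0"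
  then have pos: "0 < measure (\<psi> j) {x}" using measure_nonneg[of "\<psi> j" "{x}"] by linarith
  then have br: "\<phi> j x = u j" using best_response_exists[OF j _ pos] by auto
  note xv = best_response_props(1)[OF j br] and fx = best_response_props(2)[OF j br]
  have "q j * measure (\<psi> j) {x} \<le> tie x" unfolding rival_eq_def
    using j by (intro member_le_sum) (auto intro!: mult_nonneg_nonneg q_nonneg)
  moreover have "0 < q j * measure (\<psi> j) {x}" using pos qpos j by simp
  ultimately have tie_pos: "0 < tie x" by linarith
  have "u j = (f j x - c) * sell_prob (l-1) m (below x) (tie x)"
    using br xv by (simp add: profit_def sale_prob_eq)
  also have "\<dots> < (f j x - c) * sell_prob_no_tie (l-1) m (below x) (1 - below x)"
    using sell_prob_lt_no_tie[OF below_nonneg tie_pos _ m1] below_plus_tie_lt_1[of x] ml fx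
    by (intro mult_strict_left_mono) auto
  finally have u_lt: "u j < (f j x - c) * sell_prob_no_tie (l-1) m (below x) (1 - below x)" .
  have ev: "eventually (\<lambda>y. u j < (f j y - c) * ?G y \<and> y < x) (at_left x)"
  proof (rule eventually_conj)
    show "eventually (\<lambda>y. y < x) (at_left x)"
      unfolding eventually_at_left_field by (intro exI[of _ "x - 1"]) auto
  qed (rule order_tendstoD(1)[OF profit_no_tie_at_left[OF j] u_lt])
  have no_tie_le: "(f j y - c) * ?G y \<le> \<phi> j y" if "y < x" "u j < (f j y - c) * ?G y" for y
  proof (rule profit_ge_no_tie)
    show "y \<le> v" using that(1) xv by simp
    have "0 < ?G y"
      using sell_prob_no_tie_pos[OF below_nonneg _ m1] below_plus_tie_lt_1[of y] by simp
    moreover have "0 < (f j y - c) * ?G y" using that(2) u_pos[OF j] by linarith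
    ultimately show "0 \<le> f j y - c" by (simp add: zero_less_mult_iff)
  qed
  have "eventually (\<lambda>y. False) (at_left x)"
    using ev
  proof eventually_elim
    case (elim y)
    then show False using no_tie_le[of y] profit_le_u[OF j, of y] by linarith
  qed
  then show False by (simp add: eventually_False)
qed

lemma tie_zero: "tie x = 0"
  unfolding rival_eq_def using no_atom by simp

lemma cdf_continuous: "i \<in> {1..n} \<Longrightarrow> continuous_on UNIV (cdf (\<psi> i))"
  using finite_borel_measure.isCont_cdf[OF finite_borel] no_atom
  by (simp add: continuous_on_eq_continuous_at)

lemma below_eq_cdf: "below x = (\<Sum>i=1..n. q i * cdf (\<psi> i) x)"
  using below_plus_tie[of x] tie_zero[of x] by simp

text \<open>Without atoms the sale probability is a continuous function R of the
  rivals' cdfs.\<close>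
definition R :: "real \<Rightarrow> real" where "R x = sell_prob_no_tie (l-1) m (below x) (1 - below x)"

lemma R_pos: "0 < R x"
  unfolding R_def using sell_prob_no_tie_pos[OF below_nonneg _ m1] below_plus_tie_lt_1[of x]
  by (simp add: tie_zero)

lemma profit_eq: "x \<le> v \<Longrightarrow> \<phi> j x = (f j x - c) * R x"
  by (simp add: profit_def sale_prob_eq tie_zero sell_prob_no_ties R_def)

lemma R_continuous: "continuous_on S R"
proof -
  have "continuous_on S below" unfolding below_eq_cdf
    by (intro continuous_on_sum continuous_on_mult continuous_on_const
        continuous_on_subset[OF cdf_continuous]) auto
  then show ?thesis unfolding R_def[abs_def] sell_prob_no_tie_def by (intro continuous_intros)
qed

lemma best_responses_closed: assumes j: "j \<in> {1..n}" shows "closed {x. \<phi> j x = u j}"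
proof -
  have "continuous_on {..v} (f j)" using f_cont j continuous_on_subset by blast
  then have "continuous_on {..v} (\<lambda>x. (f j x - c) * R x)"
    by (intro continuous_intros R_continuous)
  then have "continuous_on {..v} (\<phi> j)"
    by (rule continuous_on_cong[THEN iffD1, rotated 2]) (auto simp: profit_eq)
  moreover have "{x. \<phi> j x = u j} = {x \<in> {..v}. \<phi> j x = u j}"
    using best_response_props(1)[OF j] by auto
  ultimately show ?thesis using continuous_closed_preimage_constant[of "{..v}" "\<phi> j"] by simp
qed

subsection \<open>Single crossing and gaps\<close>

text \<open>Best responses of a higher state never lie above best responses of a lower
  state: otherwise the two best-response inequalities contradict the ratio condition.\<close>
lemma best_response_order:
  assumes j: "j \<in> {1..n}" and k: "k \<in> {1..n}" and jk: "j < k"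
    and bx: "\<phi> j x = u j" and by_k: "\<phi> k y = u k"
  shows "y \<le> x"
proof (rule ccontr)
  assume "\<not> y \<le> x" then have xy: "x < y" by simp
  note xv = best_response_props(1)[OF j bx] and yv = best_response_props(1)[OF k by_k]
  define a1 a2 b1 b2
    where "a1 = f j x - c" and "a2 = f j y - c" and "b1 = f k x - c" and "b2 = f k y - c"
  have f_jk: "f j t < f k t" for t using f_order j k jk by auto
  have a1: "0 < a1" using best_response_props(2)[OF j bx] by (simp add: a1_def)
  have "f j x < f j y" using f_mono j xy by (auto simp: strict_mono_def)
  then have a2: "0 < a2" using best_response_props(2)[OF j bx] by (simp add: a2_def)
  have b1: "0 < b1" using a1 f_jk[of x] by (simp add: a1_def b1_def)
  have b2: "0 < b2" using a2 f_jk[of y] by (simp add: a2_def b2_def)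
  have br_j: "a2 * R y \<le> a1 * R x"
    using profit_le_u[OF j, of y] bx profit_eq[OF xv, of j] profit_eq[OF yv, of j]
    by (simp add: a1_def a2_def)
  have br_k: "b1 * R x \<le> b2 * R y"
    using profit_le_u[OF k, of x] by_k profit_eq[OF xv, of k] profit_eq[OF yv, of k]
    by (simp add: b1_def b2_def)
  have "a2 * R y * (b1 * R x) \<le> a1 * R x * (b2 * R y)"
    by (rule mult_mono[OF br_j br_k]) (use a1 b1 R_pos[of x] in auto)
  then have "(a2 * b1) * (R x * R y) \<le> (a1 * b2) * (R x * R y)" by (simp add: algebra_simps)
  then have "a2 * b1 \<le> a1 * b2" using R_pos[of x] R_pos[of y] by simp
  moreover have "a1 / b1 < a2 / b2"
    using ratio j k jk best_response_props(3)[OF j bx] xy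
    by (auto simp: a1_def a2_def b1_def b2_def)
  then have "a1 * b2 < a2 * b1" using b1 b2 by (simp add: field_simps)
  ultimately show False by simp
qed

lemma mass_above_lower_best_response:
  assumes j: "j \<in> {1..n}" and k: "k \<in> {1..n}" and jk: "j < k" and bz: "\<phi> j z = u j"
  shows "measure (\<psi> k) {z<..} = 0"
  using best_response_order[OF j k jk bz] by (intro measure_no_best_response[OF k]) force+

lemma mass_below_higher_best_response:
  assumes j: "j \<in> {1..n}" and k: "k \<in> {1..n}" and kj: "k < j" and bw: "\<phi> j w = u j"
  shows "measure (\<psi> k) {..<w} = 0"
  using best_response_order[OF k j kj _ bw] by (intro measure_no_best_response[OF k]) force+

lemma mass_between_best_responses:
  assumes j: "j \<in> {1..n}" and bz: "\<phi> j z = u j" and bw: "\<phi> j w = u j" and yw: "y < w"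
    and k: "k \<in> {1..n}" and kj: "k \<noteq> j"
  shows "measure (\<psi> k) {z<..y} = 0"
proof (cases "j < k")
  case True
  then show ?thesis
    by (intro mass_zero_subset[OF k _ _ mass_above_lower_best_response[OF j k True bz]]) auto
next
  case False
  then have "k < j" using kj by simp
  then show ?thesis
    using yw by (intro mass_zero_subset[OF k _ _ mass_below_higher_best_response[OF j k _ bw]]) auto
qed

text \<open>No gaps: if nobody offers in (z, y], moving from a best response z to y keeps
  the sale probability and strictly raises the price.\<close>
lemma no_gap_after_best_response:
  assumes j: "j \<in> {1..n}" and bz: "\<phi> j z = u j" and zy: "z < y" and yv: "y \<le> v"
    and empty: "\<And>k. k \<in> {1..n} \<Longrightarrow> measure (\<psi> k) {z<..y} = 0"
  shows False
proof -
  have "below y = below z" unfolding below_eq_cdf using empty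
    by (intro sum.cong refl) (simp add: mass_interval[OF _ zy])
  then have "R y = R z" by (simp add: R_def)
  moreover have "f j z < f j y" using f_mono j zy by (auto simp: strict_mono_def)
  ultimately have "\<phi> j z < \<phi> j y" using R_pos[of z] zy yv by (simp add: profit_eq)
  then show False using bz profit_le_u[OF j, of y] by simp
qed

text \<open>Every strategy lives in (g j c, v], where the price exceeds the cost and the
  penalty is acceptable.\<close>
lemma cdf_v: assumes j: "j \<in> {1..n}" shows "cdf (\<psi> j) v = 1"
  using measure_no_best_response[OF j, of "{v<..}"] best_response_props(1)[OF j]
    mass_greaterThan[OF j, of v] by force

lemma cdf_g_c: assumes j: "j \<in> {1..n}" shows "cdf (\<psi> j) (g j c) = 0"
  using measure_no_best_response[OF j, of "{..g j c}"] best_response_props(3)[OF j]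
  unfolding cdf_def by force

lemma supp_L_cdf:
  assumes j: "j \<in> {1..n}"
  shows "x \<le> supp_L (\<psi> j) \<Longrightarrow> cdf (\<psi> j) x = 0"
    and "supp_L (\<psi> j) < x \<Longrightarrow> 0 < cdf (\<psi> j) x"
  using real_distribution.supp_L_cdf[OF distr[OF j] cdf_continuous[OF j] cdf_g_c[OF j] cdf_v[OF j]]
  by auto

lemma supp_U_cdf:
  assumes j: "j \<in> {1..n}"
  shows "supp_L (\<psi> j) < supp_U (\<psi> j)" and "supp_U (\<psi> j) \<le> v"
    and "supp_U (\<psi> j) \<le> x \<Longrightarrow> cdf (\<psi> j) x = 1"
    and "x < supp_U (\<psi> j) \<Longrightarrow> cdf (\<psi> j) x < 1"
  using real_distribution.supp_U_cdf[OF distr[OF j] cdf_continuous[OF j] cdf_g_c[OF j] cdf_v[OF j]]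
  by auto

text \<open>Below any penalty of positive cdf there is a best response with the same cdf
  value: the largest best response up to that penalty (best responses form a closed set).\<close>
lemma last_best_response:
  assumes j: "j \<in> {1..n}" and pos: "0 < cdf (\<psi> j) x"
  obtains z where "z \<le> x" "\<phi> j z = u j" "cdf (\<psi> j) z = cdf (\<psi> j) x"
proof -
  let ?Z = "{w. \<phi> j w = u j} \<inter> {..x}"
  define z where "z = Sup ?Z"
  obtain w where "w \<in> {..x}" "\<phi> j w = u j"
    using best_response_exists[OF j _ pos[unfolded cdf_def]] by auto
  then have ne: "?Z \<noteq> {}" by blast
  have bdd: "bdd_above ?Z" by (rule bdd_aboveI[of _ x]) auto
  have "closed ?Z" using best_responses_closed[OF j] by (intro closed_Int) auto
  then have zZ: "z \<in> ?Z" unfolding z_def using closed_contains_Sup[OF ne bdd] by blast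
  have "cdf (\<psi> j) z = cdf (\<psi> j) x"
  proof (cases "z < x")
    case True
    have "measure (\<psi> j) {z<..x} = 0"
    proof (rule measure_no_best_response[OF j])
      fix w assume w: "w \<in> {z<..x}"
      show "\<phi> j w \<noteq> u j"
      proof
        assume "\<phi> j w = u j"
        then have "w \<le> z" unfolding z_def using w bdd by (intro cSup_upper) auto
        with w show False by simp
      qed
    qed simp
    then show ?thesis using mass_interval[OF j True] by simp
  qed (use zZ in simp)
  then show ?thesis using zZ that by blast
qed

text \<open>No flat pieces inside the support: a flat piece [x, y] would start right after a
  best response z with the same cdf value and end before a best response w, so by
  single crossing (z, y] would be a gap of all strategies.\<close>
lemma cdf_strict_mono:
  assumes j: "j \<in> {1..n}" shows "strict_mono_on {supp_L (\<psi> j)..supp_U (\<psi> j)} (cdf (\<psi> j))"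
proof (rule strict_mono_onI, rule ccontr)
  fix x y
  assume "x \<in> {supp_L (\<psi> j)..supp_U (\<psi> j)}" "y \<in> {supp_L (\<psi> j)..supp_U (\<psi> j)}" "x < y"
  then have Lx: "supp_L (\<psi> j) \<le> x" and yU: "y \<le> supp_U (\<psi> j)" and xy: "x < y" by auto
  let ?F = "cdf (\<psi> j)"
  assume "\<not> ?F x < ?F y"
  then have eq: "?F x = ?F y" using cdf_mono[OF j, of x y] xy by simp
  have "0 < ?F x" using supp_L_cdf(2)[OF j, of y] Lx xy eq by simp
  then obtain z where z: "z \<le> x" "\<phi> j z = u j" "?F z = ?F x"
    using last_best_response[OF j] by blast
  have "?F y < 1" using supp_U_cdf(4)[OF j, of x] eq xy yU by simp
  then have mass_pos: "0 < measure (\<psi> j) {y<..}" by (simp add: mass_greaterThan[OF j])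
  obtain w where w: "y < w" "\<phi> j w = u j" using best_response_exists[OF j _ mass_pos] by auto
  have zy: "z < y" using z xy by simp
  show False
  proof (rule no_gap_after_best_response[OF j z(2) zy])
    show "y \<le> v" using yU supp_U_cdf(2)[OF j] by simp
    show "measure (\<psi> k) {z<..y} = 0" if k: "k \<in> {1..n}" for k
      using mass_between_best_responses[OF j z(2) w(2) w(1) k] z eq
        mass_interval[OF j zy] by (cases "k = j") auto
  qed
qed

subsection \<open>The endpoints\<close>

text \<open>The lowest state reaches the reservation level: otherwise its last best response
  is followed by a gap up to v.\<close>
lemma supp_U_1: "supp_U (\<psi> 1) = v"
proof (rule ccontr)
  have j: "1 \<in> {1..n}" using n1 by simp
  let ?U = "supp_U (\<psi> 1)"
  assume "?U \<noteq> v" then have Uv: "?U < v" using supp_U_cdf(2)[OF j] by simp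
  obtain z where z: "z \<le> ?U" "\<phi> 1 z = u 1" "cdf (\<psi> 1) z = 1"
    using last_best_response[OF j, of ?U] supp_U_cdf(3)[OF j, of ?U] by auto
  have zv: "z < v" using z Uv by simp
  show False
  proof (rule no_gap_after_best_response[OF j z(2) zv order_refl])
    show "measure (\<psi> k) {z<..v} = 0" if k: "k \<in> {1..n}" for k
    proof (cases "k = 1")
      case True then show ?thesis
        using mass_interval[OF j zv] z cdf_v[OF j] by simp
    next
      case False then have "1 < k" using k by simp
      then show ?thesis
        by (intro mass_zero_subset[OF k _ _ mass_above_lower_best_response[OF j k _ z(2)]]) auto
    qed
  qed
qed

lemma supp_U_le_supp_L_prev:
  assumes i: "i \<in> {1..n}" and j: "j \<in> {1..n}" and ji: "j < i"
  shows "supp_U (\<psi> i) \<le> supp_L (\<psi> j)"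
proof (rule ccontr)
  let ?y = "(supp_L (\<psi> j) + supp_U (\<psi> i)) / 2"
  assume "\<not> ?thesis"
  then have y: "supp_L (\<psi> j) < ?y" "?y < supp_U (\<psi> i)" by auto
  have mass_upto_y: "0 < measure (\<psi> j) {..?y}"
    using supp_L_cdf(2)[OF j y(1)] by (simp add: cdf_def)
  obtain x where x: "x \<le> ?y" "\<phi> j x = u j" using best_response_exists[OF j _ mass_upto_y] by auto
  have mass_above_y: "0 < measure (\<psi> i) {?y<..}"
    using supp_U_cdf(4)[OF i y(2)] by (simp add: mass_greaterThan[OF i])
  obtain w where w: "?y < w" "\<phi> i w = u i" using best_response_exists[OF i _ mass_above_y] by auto
  show False using best_response_order[OF j i ji x(2) w(2)] x w by simp
qed

text \<open>No gap between consecutive supports: the last best response of state i would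
  be followed by an interval that no state uses.\<close>
lemma supp_L_prev_le_supp_U:
  assumes i: "i \<in> {2..n}"
  shows "supp_L (\<psi> (i - 1)) \<le> supp_U (\<psi> i)"
proof (rule ccontr)
  define j where "j = i - 1"
  have i': "i \<in> {1..n}" and j: "j \<in> {1..n}" and ji: "j < i" using i by (auto simp: j_def)
  let ?Ui = "supp_U (\<psi> i)" and ?Lj = "supp_L (\<psi> j)"
  assume "\<not> ?Lj \<le> ?Ui" then have UL: "?Ui < ?Lj" by (simp add: j_def)
  obtain z where z: "z \<le> ?Ui" "\<phi> i z = u i" "cdf (\<psi> i) z = 1"
    using last_best_response[OF i', of ?Ui] supp_U_cdf(3)[OF i', of ?Ui] by auto
  have zL: "z < ?Lj" using z UL by simp
  have FLj: "cdf (\<psi> j) ?Lj = 0" using supp_L_cdf(1)[OF j] by simp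
  then have mass_pos: "0 < measure (\<psi> j) {?Lj<..}" by (simp add: mass_greaterThan[OF j])
  obtain w where w: "?Lj < w" "\<phi> j w = u j" using best_response_exists[OF j _ mass_pos] by auto
  show False
  proof (rule no_gap_after_best_response[OF i' z(2) zL])
    show "?Lj \<le> v" using supp_U_cdf(1,2)[OF j] by simp
    show "measure (\<psi> k) {z<..?Lj} = 0" if k: "k \<in> {1..n}" for k
    proof -
      consider "k = i" | "i < k" | "k = j" | "k < j" using ji by (force simp: j_def)
      then show ?thesis
      proof cases
        case 1 then show ?thesis
          using mass_interval[OF i' zL] z supp_U_cdf(3)[OF i', of ?Lj] UL by simp
      next
        case 2 then show ?thesis
          by (intro mass_zero_subset[OF k _ _ mass_above_lower_best_response[OF i' k _ z(2)]]) auto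
      next
        case 3 then show ?thesis
          using mass_interval[OF j zL] FLj supp_L_cdf(1)[OF j, of z] zL by simp
      next
        case 4 then show ?thesis
          using w(1)
          by (intro mass_zero_subset[OF k _ _ mass_below_higher_best_response[OF j k _ w(2)]]) auto
      qed
    qed
  qed
qed

lemma supp_U_eq_supp_L_prev: "i \<in> {2..n} \<Longrightarrow> supp_U (\<psi> i) = supp_L (\<psi> (i - 1))"
  using supp_U_le_supp_L_prev[of i "i - 1"] supp_L_prev_le_supp_U[of i] by fastforce

lemma support_interval:
  "j \<in> {1..n} \<Longrightarrow> dist_support (\<psi> j) = {supp_L (\<psi> j)..supp_U (\<psi> j)}"
  using real_distribution.dist_support_eq_interval[OF distr supp_U_cdf(1) supp_L_cdf(1)
      supp_U_cdf(3) cdf_strict_mono] by blast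

end

theorem theorem3:
  fixes l m n :: nat and q :: "nat \<Rightarrow> real"
    and f g :: "nat \<Rightarrow> real \<Rightarrow> real" and c v :: real
    and \<psi> :: "nat \<Rightarrow> real measure"
  assumes l2: "l \<ge> 2" and m1: "1 \<le> m" and ml: "m < l" and n1: "n \<ge> 1"
    and qpos: "\<forall>i\<in>{1..n}. q i > 0"
    and qsum: "(\<Sum>i=1..n. q i) < 1"
    and f_cont: "\<forall>i\<in>{1..n}. continuous_on UNIV (f i)"
    and f_mono: "\<forall>i\<in>{1..n}. strict_mono (f i)"
    and g_cont: "\<forall>i\<in>{1..n}. continuous_on UNIV (g i)"
    and g_mono: "\<forall>i\<in>{1..n}. strict_mono (g i)"
    and gf: "\<forall>i\<in>{1..n}. \<forall>x. g i (f i x) = x"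
    and fg: "\<forall>i\<in>{1..n}. \<forall>p. f i (g i p) = p"
    and g_order: "\<forall>i\<in>{1..n}. \<forall>j\<in>{1..n}. i < j \<longrightarrow> (\<forall>p. g i p > g j p)"
    and f_order: "\<forall>i\<in>{1..n}. \<forall>j\<in>{1..n}. i < j \<longrightarrow> (\<forall>x. f i x < f j x)"
    and cpos: "c > 0"
    and g1v: "g 1 c < v"
    and ratio: "\<forall>j\<in>{1..n}. \<forall>k\<in>{1..n}. j < k \<longrightarrow> (\<forall>x y. g j c < y \<longrightarrow> y < x \<longrightarrow>
                 (f j y - c) / (f k y - c) < (f j x - c) / (f k x - c))"
    and NE: "symmetric_NE l m n q f c v \<psi>"
  shows "(\<forall>i\<in>{1..n}. dist_support (\<psi> i) = {supp_L (\<psi> i)..supp_U (\<psi> i)})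
       \<and> supp_U (\<psi> 1) = v
       \<and> (\<forall>i\<in>{2..n}. supp_U (\<psi> i) = supp_L (\<psi> (i - 1)))
       \<and> (\<forall>i\<in>{1..n}. strict_mono_on {supp_L (\<psi> i)..supp_U (\<psi> i)} (cdf (\<psi> i)))"
proof -
  interpret spectrum_NE l m n q f g c v \<psi>
    using m1 ml n1 qpos qsum f_cont f_mono g_mono gf fg f_order g1v ratio NE
    by unfold_locales blast+
  show ?thesis
    using support_interval supp_U_1 supp_U_eq_supp_L_prev cdf_strict_mono by blast
qed

end
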